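(* Let $k>1$ be an integer with $k\in\mathcal C_1$. Then $$2^k-1<a_k<2^{k+1}-1.$$ In particular $c_k/2^k\to0$ as $k\to\infty$ through $\mathcal C_1$. Furthermore, let $t_k$ be the multiplicative order of $2$ modulo $k$ and let $j_0\in\{0,1,\ldots,t_k-1\}$ be the (unique) integer with $2^{k+1}-1\equiv 2^{j_0}\pmod k$; put $s=\lfloor (k-1-j_0)/t_k\rfloor$ and $j_1=j_0+st_k$. Then $$a_k=2^{k+1}-1-2^{j_1}.$$
   Context: For a positive integer $k$, $a_k$ is the smallest positive multiple of $k$ whose sum of binary digits equals $k$, and $c_k=a_k/k$. For a positive integer $m$, $\mathcal C_m$ is the set of odd positive integers $k$ for which there exist integers $0\le j_1<j_2<\cdots<j_m\le m+k-2$ with $2^{k+m}-1\equiv \sum_{i=1}^m 2^{j_i}\pmod k$. *)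

theory Defs
  imports "HOL-Analysis.Analysis" "HOL-Number_Theory.Pocklington"
begin

fun bitsum :: "nat \<Rightarrow> nat" where
  "bitsum 0 = 0"
| "bitsum (Suc n) = Suc n mod 2 + bitsum (Suc n div 2)"

definition a_seq :: "nat \<Rightarrow> nat" where
  "a_seq k = (LEAST n. n > 0 \<and> k dvd n \<and> bitsum n = k)"

definition c_seq :: "nat \<Rightarrow> real" where
  "c_seq k = real (a_seq k) / real k"

text \<open>C m: odd positive k admitting exponents 0 \<le> j_1 < ... < j_m \<le> m + k - 2
  (encoded as a set J of m distinct exponents) with
  2^(k+m) - 1 = sum of 2^j over J  (mod k).\<close>
definition C_set :: "nat \<Rightarrow> nat set" where
  "C_set m = {k. odd k \<and> k > 0 \<and>
     (\<exists>J. J \<subseteq> {0..m + k - 2} \<and> card J = m \<and>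
        [2^(k+m) - 1 = (\<Sum>j\<in>J. 2^j)] (mod k))}"

end

theory Submission imports Defs begin

(* Write N_i = 2^(k+1) - 1 - 2^i for i <= k, the (k+1)-bit number whose
   only zero bit is at position i.  Complementing within k+1 bits shows that the
   numbers below 2^(k+1) with binary digit sum k are exactly the N_i.  Since N_i is
   decreasing in i and every N_i < 2^(k+1), the least positive multiple a_k of k with
   digit sum k is N_i1 for the largest i1 with k dividing N_i1 -- provided one exists.
   The case i = k (N_k = 2^k - 1) never occurs, as no k > 1 divides 2^k - 1.  For
   i < k, k divides N_i iff 2^i = 2^(k+1) - 1 (mod k), i.e. iff i = j0 (mod t) with t
   the order of 2 modulo k; membership of k in C_1 gives such an i below k, so
   j0 <= k - 1, and the largest such i is j1 = j0 + ((k-1-j0) div t) t. *)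

section \<open>Binary digit sums\<close>

lemma bitsum_rec: "bitsum n = n mod 2 + bitsum (n div 2)"
  by (cases n) auto

lemma complement_div_mod:
  fixes n P :: nat
  assumes "n < 2 * P"
  shows "(2 * P - 1 - n) div 2 = P - 1 - n div 2" and "(2 * P - 1 - n) mod 2 = 1 - n mod 2"
proof -
  have n: "n = 2 * (n div 2) + n mod 2" and "n mod 2 < 2" by simp_all
  hence eq: "2 * P - 1 - n = 2 * (P - 1 - n div 2) + (1 - n mod 2)" using assms by linarith
  have "n mod 2 = 0 \<or> n mod 2 = 1" by auto
  thus "(2 * P - 1 - n) div 2 = P - 1 - n div 2" "(2 * P - 1 - n) mod 2 = 1 - n mod 2"
    unfolding eq by auto
qed

lemma bitsum_complement: "n < 2 ^ m \<Longrightarrow> bitsum (2 ^ m - 1 - n) + bitsum n = m"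
proof (induction m arbitrary: n)
  case 0
  then show ?case by simp
next
  case (Suc m)
  hence n: "n < 2 * 2 ^ m" by simp
  have IH: "bitsum (2 ^ m - 1 - n div 2) + bitsum (n div 2) = m"
    using n by (intro Suc.IH) simp
  have bit: "n mod 2 \<le> 1" by simp
  have "bitsum (2 ^ Suc m - 1 - n) = (1 - n mod 2) + bitsum (2 ^ m - 1 - n div 2)"
    using complement_div_mod[OF n] bitsum_rec[of "2 * 2 ^ m - 1 - n"] bit by simp
  thus ?case using IH bitsum_rec[of n] bit by simp
qed

lemma bitsum_eq_0_iff: "bitsum n = 0 \<longleftrightarrow> n = 0"
proof (induction n rule: less_induct)
  case (less n)
  show ?case
  proof
    assume "bitsum n = 0"
    hence "n mod 2 = 0" and "bitsum (n div 2) = 0" using bitsum_rec[of n] by auto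
    moreover have "n div 2 < n \<or> n = 0" by auto
    ultimately show "n = 0" using less.IH by fastforce
  qed simp
qed

lemma bitsum_pow2: "bitsum (2 ^ j) = 1"
  by (induction j) (use bitsum_rec[of "2 ^ Suc _"] in simp_all)

lemma bitsum_eq_1_imp_pow2: "bitsum n = 1 \<Longrightarrow> \<exists>j. n = 2 ^ j"
proof (induction n rule: less_induct)
  case (less n)
  show ?case
  proof (cases "even n")
    case True
    hence half: "bitsum (n div 2) = 1" using bitsum_rec[of n] less.prems by simp
    hence "n div 2 < n" by (cases "n = 0") auto
    then obtain j where "n div 2 = 2 ^ j" using less.IH half by blast
    hence "n = 2 ^ Suc j" using True by auto
    thus ?thesis by blast
  next
    case False
    hence "bitsum (n div 2) = 0" using bitsum_rec[of n] less.prems by (simp add: odd_iff_mod_2_eq_one)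
    hence "n div 2 = 0" using bitsum_eq_0_iff by simp
    hence "n = 1" using False by presburger
    thus ?thesis by (intro exI[of _ 0]) simp
  qed
qed

lemma bitsum_all_but_one:
  assumes "i \<le> m"
  shows "bitsum (2 ^ Suc m - 1 - 2 ^ i) = m"
proof -
  have "(2::nat) ^ i < 2 ^ Suc m" by (rule power_strict_increasing) (use assms in auto)
  from bitsum_complement[OF this] show ?thesis by (simp add: bitsum_pow2)
qed

lemma bitsum_eq_below_pow2:
  assumes "n < 2 ^ Suc m" and "bitsum n = m"
  obtains i where "i \<le> m" and "n = 2 ^ Suc m - 1 - 2 ^ i"
proof -
  have "bitsum (2 ^ Suc m - 1 - n) = 1" using bitsum_complement[OF assms(1)] assms(2) by simp
  then obtain i where i: "2 ^ Suc m - 1 - n = 2 ^ i" using bitsum_eq_1_imp_pow2 by blast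
  hence "(2::nat) ^ i < 2 ^ Suc m" using assms(1) by linarith
  hence "i < Suc m" by (rule power_less_imp_less_exp[rotated]) simp
  hence "i \<le> m" by simp
  moreover have "n = 2 ^ Suc m - 1 - 2 ^ i" using i assms(1) by linarith
  ultimately show ?thesis by (rule that)
qed

section \<open>Powers of two modulo an odd number\<close>

text \<open>No k > 1 divides 2^k - 1: the order of 2 modulo the least prime factor p of k
  divides both k and p - 1, hence has no prime factor, so 2 = 1 (mod p).\<close>
lemma not_dvd_pow2_minus_1:
  fixes k :: nat
  assumes "k > 1"
  shows "\<not> k dvd 2 ^ k - 1"
proof
  assume k_dvd: "k dvd 2 ^ k - 1"
  define p where "p = (LEAST p. prime p \<and> p dvd k)"
  have p: "prime p \<and> p dvd k"
    unfolding p_def by (rule LeastI_ex) (use prime_factor_nat assms in auto)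
  have p_least: "p \<le> q" if "prime q" "q dvd k" for q
    unfolding p_def by (rule Least_le) (use that in blast)
  have p_dvd: "p dvd 2 ^ k - 1" using p dvd_trans[OF _ k_dvd] by blast
  have "odd (2 ^ k - 1 :: nat)" using assms by simp
  hence "odd p" using dvd_trans[OF _ p_dvd] by blast
  hence p_gt_2: "p > 2" using p prime_gt_1_nat[of p] by (cases "p = 2") auto
  have cop: "coprime p 2" using \<open>odd p\<close> by (simp add: coprime_commute)
  have "[2 ^ k = 1] (mod p)" using p_dvd by (simp add: cong_altdef_nat)
  hence ord_dvd_k: "ord p 2 dvd k" by (simp only: ord_divides)
  have ord_dvd_p: "ord p 2 dvd p - 1"
    using order_divides_totient[OF cop] totient_prime p by simp
  have "ord p 2 = 1"
  proof (rule ccontr)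
    assume "ord p 2 \<noteq> 1"
    then obtain q where q: "prime q" "q dvd ord p 2" using prime_factor_nat by blast
    hence "q dvd k" and "q dvd p - 1"
      using dvd_trans[OF _ ord_dvd_k] dvd_trans[OF _ ord_dvd_p] by blast+
    hence "q \<le> p - 1" using p_gt_2 by (simp add: dvd_imp_le)
    moreover have "p \<le> q" using p_least q(1) \<open>q dvd k\<close> .
    ultimately show False using p_gt_2 by linarith
  qed
  hence "[2 = 1] (mod p)" using ord_eq_Suc_0_iff by simp
  thus False using p_gt_2 by (simp add: cong_def)
qed

lemma pow2_cong_iff:
  fixes k :: nat
  assumes "odd k"
  shows "[2 ^ i = 2 ^ j] (mod k) \<longleftrightarrow> i mod ord k 2 = j mod ord k 2"
proof -
  have "coprime k 2" using assms by (simp add: coprime_commute)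
  thus ?thesis using order_divides_expdiff by (simp add: cong_def)
qed

lemma ord2_pos: "odd (k::nat) \<Longrightarrow> ord k 2 > 0"
  by (simp add: coprime_commute)

lemma dvd_all_but_one_iff:
  fixes k m i :: nat
  assumes "i \<le> m"
  shows "k dvd 2 ^ Suc m - 1 - 2 ^ i \<longleftrightarrow> [2 ^ i = 2 ^ Suc m - 1] (mod k)"
proof -
  have "(2::nat) ^ i \<le> 2 ^ m" by (rule power_increasing) (use assms in auto)
  moreover have "(2::nat) ^ m > 0" and "(2::nat) ^ Suc m = 2 * 2 ^ m" by simp_all
  ultimately have "2 ^ i \<le> (2::nat) ^ Suc m - 1" by linarith
  from cong_altdef_nat[OF this] show ?thesis by (simp only: cong_sym_eq)
qed

lemma C1_witness:
  assumes "k > 1" and "k \<in> C_set 1"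
  obtains j where "odd k" and "j \<le> k - 1" and "[2 ^ (k+1) - 1 = 2 ^ j] (mod k)"
proof -
  from assms(2) obtain J where "odd k" and J: "J \<subseteq> {0..1 + k - 2}" "card J = 1"
    "[2 ^ (k+1) - 1 = (\<Sum>j\<in>J. 2 ^ j)] (mod k)" unfolding C_set_def by auto
  from J(2) obtain j where "J = {j}" by (rule card_1_singletonE)
  thus ?thesis using that \<open>odd k\<close> J(1,3) assms(1) by auto
qed

lemma j0_exists:
  assumes "k > 1" and "k \<in> C_set 1"
  shows "\<exists>j0. j0 < ord k 2 \<and> [2 ^ (k+1) - 1 = 2 ^ j0] (mod k)"
proof -
  obtain j where odd: "odd k" and j: "[2 ^ (k+1) - 1 = 2 ^ j] (mod k)"
    using C1_witness[OF assms] by blast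
  have "[2 ^ j = 2 ^ (j mod ord k 2)] (mod k)" using pow2_cong_iff[OF odd] by simp
  hence "[2 ^ (k+1) - 1 = 2 ^ (j mod ord k 2)] (mod k)" using j cong_trans by blast
  thus ?thesis using ord2_pos[OF odd] by (intro exI[of _ "j mod ord k 2"]) simp
qed

lemma j0_unique:
  assumes "odd k"
    and "x < ord k 2" "[2 ^ (k+1) - 1 = 2 ^ x] (mod k)"
    and "y < ord k 2" "[2 ^ (k+1) - 1 = 2 ^ y] (mod k)"
  shows "x = y"
proof -
  have "[2 ^ x = 2 ^ y] (mod k)" using assms(3,5) by (metis cong_sym cong_trans)
  thus ?thesis using pow2_cong_iff[OF assms(1)] assms(2,4) by simp
qed

section \<open>The formula for a_k\<close>

lemma residue_class_top_le: "j \<le> m \<Longrightarrow> j + ((m - j) div t) * t \<le> (m::nat)"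
  using div_times_less_eq_dividend[of "m - j" t] by linarith

lemma largest_in_residue_class:
  fixes t m i j :: nat
  assumes "t > 0" "i \<le> m" "i mod t = j"
  shows "i \<le> j + ((m - j) div t) * t"
proof -
  have i: "i = j + (i div t) * t" using assms(3) by (metis add.commute div_mult_mod_eq)
  hence "(i div t) * t \<le> m - j" using assms(2) by linarith
  hence "i div t \<le> (m - j) div t" using assms(1) by (simp add: less_eq_div_iff_mult_less_eq)
  hence "(i div t) * t \<le> ((m - j) div t) * t" by simp
  thus ?thesis using i by linarith
qed

lemma all_but_one_between:
  fixes i m :: nat
  assumes "i < m"
  shows "2 ^ m - 1 < (2::nat) ^ Suc m - 1 - 2 ^ i" and "(2::nat) ^ Suc m - 1 - 2 ^ i < 2 ^ Suc m - 1"
proof -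
  have "(2::nat) ^ i < 2 ^ m" using assms by simp
  moreover have "(2::nat) ^ i \<ge> 1" and "(2::nat) ^ Suc m = 2 * 2 ^ m" by simp_all
  ultimately show "2 ^ m - 1 < (2::nat) ^ Suc m - 1 - 2 ^ i"
    and "(2::nat) ^ Suc m - 1 - 2 ^ i < 2 ^ Suc m - 1"
    by linarith+
qed

lemma a_seq_eqI:
  assumes "N > 0" "k dvd N" "bitsum N = k"
    and "\<And>n. n > 0 \<Longrightarrow> k dvd n \<Longrightarrow> bitsum n = k \<Longrightarrow> N \<le> n"
  shows "a_seq k = N"
  unfolding a_seq_def by (rule Least_equality) (use assms in auto)

text \<open>Candidates \<ge> 2^(k+1) are
  trivially larger, the others miss exactly one bit, and missing the top bit is
  impossible since k does not divide 2^k - 1.\<close>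
lemma a_seq_by_highest_missing_bit:
  assumes k: "k > 1" and i1: "i1 < k" "k dvd 2 ^ Suc k - 1 - 2 ^ i1"
    and highest: "\<And>i. i < k \<Longrightarrow> k dvd 2 ^ Suc k - 1 - 2 ^ i \<Longrightarrow> i \<le> i1"
  shows "a_seq k = 2 ^ Suc k - 1 - 2 ^ i1"
proof (rule a_seq_eqI)
  show "(2::nat) ^ Suc k - 1 - 2 ^ i1 > 0" using all_but_one_between(1)[OF i1(1)] by linarith
  show "bitsum ((2::nat) ^ Suc k - 1 - 2 ^ i1) = k" using i1(1) by (intro bitsum_all_but_one) simp
  show "k dvd 2 ^ Suc k - 1 - 2 ^ i1" by (rule i1(2))
next
  fix n assume n: "n > 0" "k dvd n" "bitsum n = k"
  show "2 ^ Suc k - 1 - 2 ^ i1 \<le> n"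
  proof (cases "n < 2 ^ Suc k")
    case True
    obtain i where i: "i \<le> k" "n = 2 ^ Suc k - 1 - 2 ^ i"
      by (rule bitsum_eq_below_pow2[OF True n(3)])
    have "i \<noteq> k"
    proof
      assume "i = k"
      hence "n = 2 ^ k - 1" using i(2) by simp
      thus False using n(2) not_dvd_pow2_minus_1[OF k] by simp
    qed
    hence "i \<le> i1" using highest i n(2) by simp
    hence "(2::nat) ^ i \<le> 2 ^ i1" by simp
    thus ?thesis unfolding i(2) by (rule diff_le_mono2)
  qed simp
qed

text \<open>The formula of the main theorem: for k in C_1 the admissible missing bits below k are
  the i \<le> k - 1 with i \<equiv> j0 (mod t), and j1 is the largest of them.\<close>
theorem a_seq_formula:
  assumes k: "k > 1" "k \<in> C_set 1"
    and j0: "j0 < ord k 2" "[2 ^ (k+1) - 1 = 2 ^ j0] (mod k)"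
  defines "j1 \<equiv> j0 + ((k - 1 - j0) div ord k 2) * ord k 2"
  shows "a_seq k = 2 ^ (k+1) - 1 - 2 ^ j1" and "j1 \<le> k - 1"
proof -
  define t where "t = ord k 2"
  obtain j where odd: "odd k" and j: "j \<le> k - 1" "[2 ^ (k+1) - 1 = 2 ^ j] (mod k)"
    using C1_witness[OF k] by blast
  have t: "t > 0" unfolding t_def using ord2_pos[OF odd] .
  have j0': "[2 ^ Suc k - 1 = 2 ^ j0] (mod k)" using j0(2) by simp
  have admissible_iff: "k dvd 2 ^ Suc k - 1 - 2 ^ i \<longleftrightarrow> i mod t = j0" if "i \<le> k" for i
  proof -
    have "k dvd 2 ^ Suc k - 1 - 2 ^ i \<longleftrightarrow> [2 ^ i = 2 ^ j0] (mod k)"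
      unfolding dvd_all_but_one_iff[OF that]
      using cong_trans[OF _ j0'] cong_trans[OF _ cong_sym[OF j0']] by blast
    thus ?thesis using pow2_cong_iff[OF odd] j0(1) unfolding t_def by simp
  qed
  have "[2 ^ j = 2 ^ j0] (mod k)" using j(2) j0(2) by (metis cong_sym cong_trans)
  hence "j mod t = j0" using pow2_cong_iff[OF odd] j0(1) unfolding t_def by simp
  hence "j0 \<le> k - 1" using j(1) by (metis le_trans mod_less_eq_dividend)
  thus j1_le: "j1 \<le> k - 1" unfolding j1_def by (rule residue_class_top_le)
  have "j1 mod t = j0" unfolding j1_def t_def using j0(1) by simp
  hence "a_seq k = 2 ^ Suc k - 1 - 2 ^ j1"
  proof (intro a_seq_by_highest_missing_bit k(1))
    show "j1 < k" using j1_le k(1) by simp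
    thus "k dvd 2 ^ Suc k - 1 - 2 ^ j1" using admissible_iff \<open>j1 mod t = j0\<close> by simp
  next
    fix i assume "i < k" "k dvd 2 ^ Suc k - 1 - 2 ^ i"
    hence "i mod t = j0" using admissible_iff by simp
    thus "i \<le> j1" unfolding j1_def t_def[symmetric]
      using largest_in_residue_class[OF t, of i "k - 1"] \<open>i < k\<close> by simp
  qed
  thus "a_seq k = 2 ^ (k+1) - 1 - 2 ^ j1" by simp
qed

text \<open>Since the missing bit of a_k sits at a position \<le> k - 1, a_k lies strictly
  between 2^k - 1 and 2^(k+1) - 1.\<close>
corollary a_seq_bounds:
  assumes "k > 1" and "k \<in> C_set 1"
  shows "2 ^ k - 1 < a_seq k" and "a_seq k < 2 ^ (k+1) - 1"
proof -
  obtain j0 where j0: "j0 < ord k 2" "[2 ^ (k+1) - 1 = 2 ^ j0] (mod k)"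
    using j0_exists[OF assms] by blast
  define j1 where "j1 = j0 + ((k - 1 - j0) div ord k 2) * ord k 2"
  have a: "a_seq k = 2 ^ (k+1) - 1 - 2 ^ j1" and j1: "j1 \<le> k - 1"
    using a_seq_formula[OF assms j0] unfolding j1_def by auto
  have "j1 < k" using j1 assms(1) by simp
  from all_but_one_between[OF this]
  show "2 ^ k - 1 < a_seq k" "a_seq k < 2 ^ (k+1) - 1" unfolding a by simp_all
qed

lemma c_seq_over_pow2_le:
  assumes "k > 1" and "k \<in> C_set 1"
  shows "c_seq k / 2 ^ k \<le> 2 / real k"
proof -
  have "a_seq k \<le> 2 * 2 ^ k" using a_seq_bounds(2)[OF assms] by simp
  hence "real (a_seq k) \<le> real (2 * 2 ^ k)" by (rule of_nat_mono)
  hence "real (a_seq k) \<le> 2 * 2 ^ k" by simp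
  hence "real (a_seq k) / (real k * 2 ^ k) \<le> 2 * 2 ^ k / (real k * 2 ^ k)"
    using assms(1) by (intro divide_right_mono) auto
  thus ?thesis unfolding c_seq_def by simp
qed

lemma c_seq_over_pow2_tendsto_0:
  "((\<lambda>n. c_seq n / 2 ^ n) \<longlongrightarrow> 0) (inf at_top (principal (C_set 1)))"
proof (rule Lim_null_comparison)
  show "\<forall>\<^sub>F n in inf at_top (principal (C_set 1)). norm (c_seq n / 2 ^ n) \<le> 2 / real n"
    unfolding eventually_inf_principal
    using eventually_gt_at_top[of 1]
    by eventually_elim (use c_seq_over_pow2_le in \<open>auto simp: c_seq_def\<close>)
  show "((\<lambda>n. 2 / real n) \<longlongrightarrow> 0) (inf at_top (principal (C_set 1)))"
    by (rule tendsto_mono[OF inf_le1 lim_const_over_n])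
qed

theorem mainTheorem5:
  fixes k :: nat
  assumes "k > 1" and "k \<in> C_set 1"
  shows "2^k - 1 < a_seq k \<and> a_seq k < 2^(k+1) - 1
    \<and> ((\<lambda>n. c_seq n / 2^n) \<longlongrightarrow> 0) (inf at_top (principal (C_set 1)))
    \<and> (\<exists>!j0. j0 < ord k 2 \<and> [2^(k+1) - 1 = 2^j0] (mod k))
    \<and> (\<forall>j0. j0 < ord k 2 \<and> [2^(k+1) - 1 = 2^j0] (mod k) \<longrightarrow>
         (let t = ord k 2; s = (k - 1 - j0) div t; j1 = j0 + s * t
          in a_seq k = 2^(k+1) - 1 - 2^j1))"
proof -
  have "odd k" using C1_witness[OF assms] by blast
  have unique: "\<exists>!j0. j0 < ord k 2 \<and> [2^(k+1) - 1 = 2^j0] (mod k)"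
    by (rule ex_ex1I) (use j0_exists[OF assms] j0_unique[OF \<open>odd k\<close>] in auto)
  have formula: "\<forall>j0. j0 < ord k 2 \<and> [2^(k+1) - 1 = 2^j0] (mod k) \<longrightarrow>
         (let t = ord k 2; s = (k - 1 - j0) div t; j1 = j0 + s * t
          in a_seq k = 2^(k+1) - 1 - 2^j1)"
    using a_seq_formula(1)[OF assms] by (simp add: Let_def)
  show ?thesis
    using a_seq_bounds[OF assms] c_seq_over_pow2_tendsto_0 unique formula by blast
qed

end
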